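(* Let $X$ be a linearly ordered set and let $k,n\ge1$ be odd natural numbers with $k\le\sqrt n$. Then $\mathrm{med}_k\in\langle\{\mathrm{med}_n\}\rangle$.
   Context: A clone on $X$ is a set of finitary operations on $X$ containing all projections and closed under composition; $\langle\mathscr F\rangle$ is the smallest clone containing $\mathscr F$. For odd $n$, $\mathrm{med}_n(x_1,\dots,x_n)$ is the $\frac{n+1}{2}$-th smallest entry of $(x_1,\dots,x_n)$ (counted with multiplicity) with respect to the linear order of $X$. *)

theory Defs
  imports Complex_Main
begin

text \<open>A finitary operation on the type 'a is represented as a pair (n, f) where
  n is its arity and f :: 'a list \<Rightarrow> 'a is meant to be applied to lists of
  length n only (its values on other lists are irrelevant).\<close>

type_synonym 'a op = "nat \<times> ('a list \<Rightarrow> 'a)"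

definition is_clone :: "'a op set \<Rightarrow> bool" where
  "is_clone C \<longleftrightarrow>
     (\<forall>n i. i < n \<longrightarrow> (n, \<lambda>xs. xs ! i) \<in> C) \<and>
     (\<forall>n m f gs. (n, f) \<in> C \<longrightarrow> length gs = n \<longrightarrow> (\<forall>g\<in>set gs. (m, g) \<in> C)
        \<longrightarrow> (m, \<lambda>xs. f (map (\<lambda>g. g xs) gs)) \<in> C) \<and>
     (\<forall>n f g. (n, f) \<in> C \<longrightarrow> (\<forall>xs. length xs = n \<longrightarrow> f xs = g xs) \<longrightarrow> (n, g) \<in> C)"

definition clone_gen :: "'a op set \<Rightarrow> 'a op set" where
  "clone_gen F = \<Inter>{C. is_clone C \<and> F \<subseteq> C}"

definition med :: "'a::linorder list \<Rightarrow> 'a" where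
  "med xs = sort xs ! (length xs div 2)"

end

theory Submission
  imports Defs
begin

text \<open>Write \<open>n = q k + r\<close> with \<open>r < k \<le> q\<close>; the bound \<open>k \<le> q\<close> is where \<open>k \<le> \<surd>n\<close> enters.
  Feeding \<open>med\<^sub>n\<close> with \<open>q\<close> copies of \<open>x\<^sub>1, \<dots>, x\<^sub>k\<close> followed by \<open>r\<close> copies of \<open>x\<^sub>1\<close> yields
  \<open>med\<^sub>k(x)\<close>: the median \<open>m\<close> of \<open>x\<close> has at most \<open>(k - 1)/2\<close> entries of \<open>x\<close> strictly below
  (above) it, hence at most \<open>r + q (k - 1)/2 \<le> (n - 1)/2\<close> entries of the long list, and this
  count condition characterises the median of a list of odd length.\<close>

lemma sorted_length_filter_le_iff:
  fixes s :: "'a::linorder list"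
  assumes "sorted s" "i < length s"
    and down_closed: "\<And>x y. P y \<Longrightarrow> x \<le> y \<Longrightarrow> P x"
  shows "length (filter P s) \<le> i \<longleftrightarrow> \<not> P (s ! i)"
proof
  assume "length (filter P s) \<le> i"
  show "\<not> P (s ! i)"
  proof
    assume "P (s ! i)"
    then have "{0..i} \<subseteq> {j. j < length s \<and> P (s ! j)}"
      using assms by (auto intro!: down_closed[of "s ! i"] sorted_nth_mono)
    then have "card {0..i} \<le> card {j. j < length s \<and> P (s ! j)}"
      by (intro card_mono) auto
    then have "Suc i \<le> length (filter P s)"
      by (simp add: length_filter_conv_card)
    with \<open>length (filter P s) \<le> i\<close> show False by simp
  qed
next
  assume "\<not> P (s ! i)"
  have "j < i" if "j < length s" "P (s ! j)" for j
  proof (rule ccontr)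
    assume "\<not> j < i"
    with assms(1) that(1) have "s ! i \<le> s ! j"
      by (simp add: sorted_nth_mono)
    with that(2) \<open>\<not> P (s ! i)\<close> show False
      using down_closed by blast
  qed
  then have "{j. j < length s \<and> P (s ! j)} \<subseteq> {0..<i}"
    by auto
  then show "length (filter P s) \<le> i"
    by (metis card_atLeastLessThan card_mono diff_zero finite_atLeastLessThan length_filter_conv_card)
qed

lemma med_eq_iff:
  fixes ys :: "'a::linorder list"
  assumes "odd (length ys)"
  shows "med ys = m \<longleftrightarrow>
    length (filter (\<lambda>y. y < m) ys) \<le> length ys div 2 \<and>
    length (filter (\<lambda>y. m < y) ys) \<le> length ys div 2"
proof -
  define s where "s = sort ys"
  define i where "i = length ys div 2"
  have s: "sorted s" "length s = length ys" "i < length s"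
    using assms by (auto simp: s_def i_def elim!: oddE)
  have count_sort: "length (filter P ys) = length (filter P s)" for P
    unfolding s_def by (metis filter_sort length_sort)
  have below: "length (filter (\<lambda>y. y < m) ys) \<le> i \<longleftrightarrow> m \<le> s ! i"
    using sorted_length_filter_le_iff[OF s(1,3), of "\<lambda>y. y < m"]
    by (auto simp: count_sort not_less)
  have "length (filter (\<lambda>y. m < y) ys) = length ys - length (filter (\<lambda>y. y \<le> m) s)"
    using sum_length_filter_compl[of "\<lambda>y. m < y" s] by (simp add: count_sort s(2) not_less)
  moreover have "length (filter (\<lambda>y. y \<le> m) s) \<le> i \<longleftrightarrow> m < s ! i"
    using sorted_length_filter_le_iff[OF s(1,3), of "\<lambda>y. y \<le> m"] by (auto simp: not_le)
  moreover have "length ys - i = Suc i"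
    using assms by (auto simp: i_def elim!: oddE)
  ultimately have above: "length (filter (\<lambda>y. m < y) ys) \<le> i \<longleftrightarrow> s ! i \<le> m"
    by auto
  have "med ys = s ! i"
    by (simp add: med_def s_def i_def)
  with below above show ?thesis
    by (auto simp: i_def)
qed

lemma length_filter_concat_replicate:
  "length (filter P (concat (replicate q xs))) = q * length (filter P xs)"
  by (induction q) auto

lemma med_replicate_append_concat_replicate:
  fixes xs :: "'a::linorder list"
  assumes "odd (length xs)" "r < q" "odd (r + q * length xs)"
  shows "med (replicate r x @ concat (replicate q xs)) = med xs"
proof -
  define ys where "ys = replicate r x @ concat (replicate q xs)"
  obtain h where h: "length xs = 2 * h + 1"
    using assms(1) oddE by blast
  have len_ys: "length ys = r + q * length xs"
    by (simp add: ys_def length_concat sum_list_replicate)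
  have count_ys: "length (filter P ys) \<le> r + q * h" if "length (filter P xs) \<le> h" for P
  proof -
    have "length (filter P ys) \<le> r + q * length (filter P xs)"
      using length_filter_le[of P "replicate r x"] by (simp add: ys_def length_filter_concat_replicate)
    also have "\<dots> \<le> r + q * h"
      using that by simp
    finally show ?thesis .
  qed
  have half: "r + q * h \<le> length ys div 2"
    using assms(2) by (simp add: len_ys h algebra_simps)
  have "length (filter (\<lambda>y. y < med xs) xs) \<le> h" "length (filter (\<lambda>y. med xs < y) xs) \<le> h"
    using med_eq_iff[OF assms(1), of "med xs"] by (simp_all add: h)
  then have "med ys = med xs"
    using count_ys half assms(3) by (simp add: med_eq_iff len_ys) (blast intro: order_trans)
  then show ?thesis
    by (simp add: ys_def)
qed

lemma is_clone_projD: "is_clone C \<Longrightarrow> i < n \<Longrightarrow> (n, \<lambda>xs. xs ! i) \<in> C"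
  unfolding is_clone_def by blast

lemma is_clone_compD:
  "is_clone C \<Longrightarrow> (n, f) \<in> C \<Longrightarrow> length gs = n \<Longrightarrow> (\<And>g. g \<in> set gs \<Longrightarrow> (m, g) \<in> C)
    \<Longrightarrow> (m, \<lambda>xs. f (map (\<lambda>g. g xs) gs)) \<in> C"
  unfolding is_clone_def by blast

lemma is_clone_extD:
  "is_clone C \<Longrightarrow> (n, f) \<in> C \<Longrightarrow> (\<And>xs. length xs = n \<Longrightarrow> f xs = g xs) \<Longrightarrow> (n, g) \<in> C"
  unfolding is_clone_def by blast

lemma is_clone_Inter:
  assumes "\<And>C. C \<in> S \<Longrightarrow> is_clone C"
  shows "is_clone (\<Inter>S)"
  unfolding is_clone_def
  using is_clone_projD[OF assms] is_clone_compD[OF assms] is_clone_extD[OF assms]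
  by (intro conjI allI impI InterI) auto

lemma is_clone_clone_gen: "is_clone (clone_gen F)"
  unfolding clone_gen_def by (rule is_clone_Inter) blast

lemma clone_gen_base: "F \<subseteq> clone_gen F"
  unfolding clone_gen_def by blast

lemma clone_minorI:
  assumes C: "is_clone C" and f: "(n, f) \<in> C" and "length ixs = n" "\<forall>i\<in>set ixs. i < k"
    and g: "\<And>xs. length xs = k \<Longrightarrow> g xs = f (map (nth xs) ixs)"
  shows "(k, g) \<in> C"
proof -
  have "(k, \<lambda>xs. f (map (\<lambda>h. h xs) (map (\<lambda>i xs. xs ! i) ixs))) \<in> C"
    using assms(3,4) by (intro is_clone_compD[OF C f]) (auto intro: is_clone_projD[OF C])
  then show ?thesis
    by (rule is_clone_extD[OF C]) (simp add: g o_def)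
qed

lemma mod_less_div_if_le_sqrt:
  fixes k n :: nat
  assumes "0 < k" "real k \<le> sqrt (real n)"
  shows "n mod k < n div k"
proof -
  have "real (k * k) \<le> real n"
    using assms(2) real_sqrt_le_iff[of "real (k * k)"] by (simp add: real_sqrt_mult)
  then have "k * k \<le> n"
    by (rule of_nat_le_iff[THEN iffD1])
  then have "k \<le> n div k"
    using assms(1) div_le_mono[of "k * k" n k] by simp
  with assms(1) show ?thesis
    using mod_less_divisor[of k n] by linarith
qed

theorem mainTheorem3:
  fixes k n :: nat
  assumes "odd k" "odd n" "k \<ge> 1" "n \<ge> 1" "real k \<le> sqrt (real n)"
  shows "(k, med :: 'a::linorder list \<Rightarrow> 'a) \<in> clone_gen {(n, med)}"
proof -
  define q where "q = n div k"
  define r where "r = n mod k"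
  have n: "n = r + q * k"
    by (simp add: q_def r_def)
  have "r < q"
    using mod_less_div_if_le_sqrt[OF _ assms(5)] assms(3) by (simp add: q_def r_def)
  define ixs where "ixs = replicate r 0 @ concat (replicate q [0..<k])"
  have "length ixs = n"
    by (simp add: ixs_def length_concat sum_list_replicate n)
  moreover have "\<forall>i\<in>set ixs. i < k"
    using assms(3) \<open>r < q\<close> by (auto simp: ixs_def)
  moreover have "med xs = med (map (nth xs) ixs)" if "length xs = k" for xs :: "'a list"
  proof -
    have "map (nth xs) ixs = replicate r (xs ! 0) @ concat (replicate q xs)"
      using that map_nth[of xs] by (simp add: ixs_def map_concat)
    then show ?thesis
      using med_replicate_append_concat_replicate[of xs r q] assms(1,2) \<open>r < q\<close> that n by simp
  qed
  ultimately show ?thesis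
    using clone_minorI[OF is_clone_clone_gen clone_gen_base[THEN subsetD]] by blast
qed

end
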